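(* Consider, for each $n$, the model and algorithm described in the context, with constants $\alpha\in[0,1/2)$, $c>0$, $p\in[0,1/2)$, erasure probability $\epsilon=1-c/n^{\alpha}$, $r\to\infty$, and $k\le n^{\alpha-\gamma}$ for a constant $\gamma>0$. Run $\texttt{local\_algo}(k)$ and let $\mathbf Y_k$ denote $\mathbf Y$ restricted to the $k$ rows selected in Step 1. Then with probability tending to 1 as $n\to\infty$, $$\max_{j}|\mathbf Y_k(:,j)|\le \lfloor 1/\gamma\rfloor,$$ where the maximum is over all columns $j$.
   Context: Model: $\mathbf X$ is an $n\times n$ binary matrix. Let $\{A_i\}_{i=1}^r$ be a partition of the row indices and $\{B_i\}_{i=1}^r$ a partition of the column indices, with $|A_i|=|B_i|=k$ for all $i$ (so $n=rk$). Let $\xi_{ij}$ be i.i.d. Bernoulli$(1/2)$ and set $\mathbf X(a,b)=\xi_{ij}$ for $(a,b)\in A_i\times B_j$. The observed matrix $\mathbf Y$ (entries in $\{0,1,*\}$) is obtained by passing each entry of $\mathbf X$ independently through a binary symmetric channel with crossover probability $p$, then independently erasing each entry (replacing it by $*$) with probability $\epsilon$. Row 1 belongs to $A_1$. Similarity: $s_{ij}=\sum_{l=1}^n \mathbf 1\{\mathbf Y(i,l)\ne *\}\mathbf 1\{\mathbf Y(j,l)\ne *\}\mathbf 1\{\mathbf Y(i,l)=\mathbf Y(j,l)\}$. Algorithm $\texttt{local\_algo}(T)$: Step 1 selects the $T$ rows with highest $s_{1i}$, $i=1,\dots,n$; Step 2 selects, among columns $j$ with $\mathbf Y(1,j)=*$,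 a column with the maximum number of 1's within the selected rows. For $\bar y\in\{0,1,*\}^k$, $|\bar y|$ denotes the number of non-erased entries (0's and 1's) of $\bar y$; $\mathbf Y_k(:,j)$ is the $j$-th column of $\mathbf Y_k$. *)

theory Defs
  imports "HOL-Probability.Probability"
begin

text \<open>Observed matrices: entries Some True = 1, Some False = 0, None = erased.
  Row/column indices are 0..n-1; row 0 is the paper's row 1.\<close>
type_synonym obsmat = "nat \<times> nat \<Rightarrow> bool option"

text \<open>The observation map: block-constant matrix X(a,b) = xi(blkA a, blkB b),
  passed through a BSC (flip) and then an erasure channel (er).\<close>
definition observe ::
  "nat \<Rightarrow> (nat \<Rightarrow> nat) \<Rightarrow> (nat \<Rightarrow> nat) \<Rightarrow>
   (nat \<times> nat \<Rightarrow> bool) \<times> (nat \<times> nat \<Rightarrow> bool) \<times> (nat \<times> nat \<Rightarrow> bool) \<Rightarrow> obsmat" where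
  "observe n blkA blkB w = (case w of (xi, fl, er) \<Rightarrow>
     (\<lambda>(a, b). if a < n \<and> b < n then
                  (if er (a, b) then None else Some (xi (blkA a, blkB b) \<noteq> fl (a, b)))
                else None))"

definition Ypmf ::
  "nat \<Rightarrow> nat \<Rightarrow> (nat \<Rightarrow> nat) \<Rightarrow> (nat \<Rightarrow> nat) \<Rightarrow> real \<Rightarrow> real \<Rightarrow> obsmat pmf" where
  "Ypmf n r blkA blkB p eps =
     map_pmf (observe n blkA blkB)
       (pair_pmf (Pi_pmf ({..<r} \<times> {..<r}) False (\<lambda>_. bernoulli_pmf (1/2)))
         (pair_pmf (Pi_pmf ({..<n} \<times> {..<n}) False (\<lambda>_. bernoulli_pmf p))
                   (Pi_pmf ({..<n} \<times> {..<n}) False (\<lambda>_. bernoulli_pmf eps))))"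

definition sim :: "nat \<Rightarrow> obsmat \<Rightarrow> nat \<Rightarrow> nat \<Rightarrow> nat" where
  "sim n Y i j = card {l \<in> {..<n}. Y (i, l) \<noteq> None \<and> Y (j, l) \<noteq> None \<and> Y (i, l) = Y (j, l)}"

text \<open>S is a valid outcome of Step 1 of local_algo(T): T rows with highest s_{1i}
  (any tie-breaking).\<close>
definition step1_valid :: "nat \<Rightarrow> nat \<Rightarrow> obsmat \<Rightarrow> nat set \<Rightarrow> bool" where
  "step1_valid n T Y S \<longleftrightarrow> S \<subseteq> {..<n} \<and> card S = T \<and>
     (\<forall>i\<in>S. \<forall>j\<in>{..<n} - S. sim n Y 0 j \<le> sim n Y 0 i)"

definition block_partition :: "nat \<Rightarrow> nat \<Rightarrow> nat \<Rightarrow> (nat \<Rightarrow> nat) \<Rightarrow> bool" where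
  "block_partition n r k blk \<longleftrightarrow> (\<forall>a<n. blk a < r) \<and>
     (\<forall>i<r. card {a \<in> {..<n}. blk a = i} = k)"

definition col_count :: "obsmat \<Rightarrow> nat set \<Rightarrow> nat \<Rightarrow> nat" where
  "col_count Y S j = card {i \<in> S. Y (i, j) \<noteq> None}"

end

theory Submission
  imports Defs "HOL-Real_Asymp.Real_Asymp"
begin

text \<open>Write \<open>\<delta> = (1 - 2p)^2\<close>. Given the block bits, the similarity of row 1 with a row \<open>b\<close> is a
  sum of \<open>n\<close> independent indicators. Its mean is at least \<open>n (1 - \<epsilon>)^2 (1 + \<delta>)/2\<close> when \<open>b\<close> lies in
  the block of row 1, and at most \<open>n (1 - \<epsilon>)^2 ((1 + \<delta>)/2 - \<delta>/4)\<close> otherwise, provided no other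
  row block has bits agreeing with those of the first row block on \<open>3r/4\<close> of the column blocks,
  which fails with probability at most \<open>r exp(-r/32)\<close>. As \<open>n (1 - \<epsilon>)^2 = c^2 n^(1-2\<alpha>)\<close> grows
  polynomially, Chernoff bounds show that Step 1 selects exactly the block of row 1 except with
  probability \<open>n exp(-\<Omega>(n^(1-2\<alpha>)))\<close>. A fixed column has more than \<open>m\<close> non-erased entries in
  that block with probability at most \<open>(k choose m+1) (c n^-\<alpha>)^(m+1) \<le> c^(m+1) n^(-\<gamma>(m+1))\<close>, and
  for \<open>m = \<lfloor>1/\<gamma>\<rfloor>\<close> the union bound over the \<open>n\<close> columns still tends to \<open>0\<close>.\<close>

section \<open>Finite product distributions\<close>

lemma finite_set_pmf_Pi_pmf:
  fixes P :: "'a \<Rightarrow> 'b::finite pmf"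
  assumes "finite I"
  shows "finite (set_pmf (Pi_pmf I d P))"
proof -
  have "set_pmf (Pi_pmf I d P) \<subseteq> PiE_dflt I d (\<lambda>_. UNIV)"
    using set_Pi_pmf_subset'[OF assms, of d P] unfolding PiE_dflt_def by auto
  moreover have "finite (PiE_dflt I d (\<lambda>_. (UNIV::'b set)))"
    using assms by (intro finite_PiE_dflt) auto
  ultimately show ?thesis by (rule finite_subset)
qed

lemma prob_eq_expectation_indicator:
  "measure_pmf.prob M A = measure_pmf.expectation M (\<lambda>x. of_bool (x \<in> A))"
proof -
  have "(\<lambda>x. of_bool (x \<in> A) :: real) = indicator A" by (auto simp: indicator_def)
  then show ?thesis by simp
qed

lemma expectation_pair_pmf:
  fixes f :: "_ \<Rightarrow> real"
  assumes "finite (set_pmf A)" "finite (set_pmf B)"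
  shows "measure_pmf.expectation (pair_pmf A B) f =
         measure_pmf.expectation A (\<lambda>x. measure_pmf.expectation B (\<lambda>y. f (x, y)))"
proof -
  have "measure_pmf.expectation (pair_pmf A B) f =
        (\<Sum>z\<in>set_pmf A \<times> set_pmf B. f z * pmf (pair_pmf A B) z)"
    using assms by (intro integral_measure_pmf_real) auto
  also have "\<dots> = (\<Sum>x\<in>set_pmf A. \<Sum>y\<in>set_pmf B. f (x,y) * (pmf A x * pmf B y))"
    unfolding sum.cartesian_product by (auto intro!: sum.cong simp: pmf_pair)
  also have "\<dots> = (\<Sum>x\<in>set_pmf A. (\<Sum>y\<in>set_pmf B. f (x,y) * pmf B y) * pmf A x)"
    by (simp add: sum_distrib_right sum_distrib_left mult_ac)
  also have "\<dots> = measure_pmf.expectation A (\<lambda>x. measure_pmf.expectation B (\<lambda>y. f (x, y)))"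
    using assms by (simp add: integral_measure_pmf_real[of "set_pmf A"] integral_measure_pmf_real[of "set_pmf B"])
  finally show ?thesis .
qed

lemma prob_pair_pmf_le:
  assumes "finite (set_pmf A)" "finite (set_pmf B)"
    and "\<And>x. x \<in> set_pmf A \<Longrightarrow> measure_pmf.prob B {y. (x, y) \<in> E} \<le> c"
  shows "measure_pmf.prob (pair_pmf A B) E \<le> c"
proof -
  have "measure_pmf.prob (pair_pmf A B) E =
        measure_pmf.expectation A (\<lambda>x. measure_pmf.prob B {y. (x, y) \<in> E})"
    by (simp add: prob_eq_expectation_indicator expectation_pair_pmf[OF assms(1,2)])
  also have "\<dots> \<le> measure_pmf.expectation A (\<lambda>_. c)"
    using assms by (intro integral_mono_AE) (auto intro!: integrable_measure_pmf_finite AE_pmfI)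
  finally show ?thesis by simp
qed

lemma prob_pair_pmf_fst:
  "measure_pmf.prob (pair_pmf A B) {z. P (fst z)} = measure_pmf.prob A {x. P x}"
  by (metis (no_types) map_fst_pair_pmf measure_map_pmf vimage_Collect_eq)

lemma prob_UN_le_card_mult:
  assumes "finite I" "\<And>i. i \<in> I \<Longrightarrow> measure_pmf.prob M (F i) \<le> c"
  shows "measure_pmf.prob M (\<Union>i\<in>I. F i) \<le> real (card I) * c"
proof -
  have "measure_pmf.prob M (\<Union>i\<in>I. F i) \<le> (\<Sum>i\<in>I. measure_pmf.prob M (F i))"
    using assms by (intro measure_pmf.finite_measure_subadditive_finite) auto
  also have "\<dots> \<le> (\<Sum>i\<in>I. c)" using assms by (intro sum_mono) auto
  finally show ?thesis by simp
qed

lemma exponential_Markov: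
  fixes X :: "_ \<Rightarrow> real"
  assumes "finite (set_pmf M)" "t \<ge> 0"
  shows "measure_pmf.prob M {x. \<tau> \<le> X x} \<le>
         measure_pmf.expectation M (\<lambda>x. exp (t * X x)) / exp (t * \<tau>)"
proof -
  have "of_bool (\<tau> \<le> X x) \<le> exp (t * X x) / exp (t * \<tau>)" for x
    using assms(2) by (auto simp: mult_left_mono)
  then have "measure_pmf.expectation M (\<lambda>x. of_bool (\<tau> \<le> X x)) \<le>
             measure_pmf.expectation M (\<lambda>x. exp (t * X x) / exp (t * \<tau>))"
    using assms(1) by (intro integral_mono_AE AE_pmfI) (auto intro!: integrable_measure_pmf_finite)
  then show ?thesis by (simp add: prob_eq_expectation_indicator)
qed

lemma expectation_prod_Pi_pmf_inj:
  fixes g :: "'l \<Rightarrow> 'b::finite \<Rightarrow> real" and P :: "'a \<Rightarrow> 'b pmf"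
  assumes "finite I" "inj_on u L" "u ` L \<subseteq> I" "\<And>l y. l \<in> L \<Longrightarrow> 0 \<le> g l y"
  shows "measure_pmf.expectation (Pi_pmf I d P) (\<lambda>w. \<Prod>l\<in>L. g l (w (u l))) =
         (\<Prod>l\<in>L. measure_pmf.expectation (P (u l)) (g l))"
proof -
  define f where "f x y = (if x \<in> u ` L then g (the_inv_into L u x) y else 1)" for x y
  have f_u: "f (u l) = g l" if "l \<in> L" for l
    using that assms(2) by (auto simp: f_def fun_eq_iff the_inv_into_f_f)
  have f_out: "f x = (\<lambda>_. 1)" if "x \<notin> u ` L" for x
    using that by (auto simp: f_def fun_eq_iff)
  have prod_I: "(\<Prod>x\<in>I. h x) = (\<Prod>l\<in>L. h (u l))"
    if "\<And>x. x \<in> I - u ` L \<Longrightarrow> h x = 1" for h :: "'a \<Rightarrow> real"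
    using assms(1-3) that by (simp add: prod.mono_neutral_right[of I "u ` L"] prod.reindex)
  have "measure_pmf.expectation (Pi_pmf I d P) (\<lambda>w. \<Prod>x\<in>I. f x (w x)) =
        (\<Prod>x\<in>I. measure_pmf.expectation (P x) (f x))"
    using assms by (intro expectation_prod_Pi_pmf integrable_measure_pmf_finite)
      (auto simp: f_def the_inv_into_f_f)
  moreover have "(\<Prod>x\<in>I. f x (w x)) = (\<Prod>l\<in>L. g l (w (u l)))" for w
    by (subst prod_I) (auto simp: f_def f_u)
  moreover have "(\<Prod>x\<in>I. measure_pmf.expectation (P x) (f x)) =
                 (\<Prod>l\<in>L. measure_pmf.expectation (P (u l)) (g l))"
    by (subst prod_I) (auto simp: f_out f_u)
  ultimately show ?thesis by simp
qed

lemma expectation_prod_Pi_pmf_disjoint_pairs: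
  fixes G :: "'l \<Rightarrow> 'b::finite \<Rightarrow> 'b \<Rightarrow> real" and P :: "'a \<Rightarrow> 'b pmf"
  assumes "finite I" "inj_on u L" "inj_on v L" "u ` L \<subseteq> I" "v ` L \<subseteq> I" "u ` L \<inter> v ` L = {}"
    and "\<And>l x y. l \<in> L \<Longrightarrow> 0 \<le> G l x y"
  shows "measure_pmf.expectation (Pi_pmf I d P) (\<lambda>w. \<Prod>l\<in>L. G l (w (u l)) (w (v l))) =
         (\<Prod>l\<in>L. measure_pmf.expectation (P (u l))
                     (\<lambda>x. measure_pmf.expectation (P (v l)) (\<lambda>y. G l x y)))"
proof -
  define A where "A = u ` L"
  define B where "B = I - A"
  have fin: "finite A" "finite B" using assms(1,4) by (auto simp: A_def B_def intro: finite_subset)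
  have "I = A \<union> B" using assms(4) by (auto simp: A_def B_def)
  then have split: "Pi_pmf I d P = map_pmf (\<lambda>(f,g) x. if x \<in> A then f x else g x)
                                    (pair_pmf (Pi_pmf A d P) (Pi_pmf B d P))"
    using fin by (simp only:) (rule Pi_pmf_union, auto simp: B_def)
  have "measure_pmf.expectation (Pi_pmf I d P) (\<lambda>w. \<Prod>l\<in>L. G l (w (u l)) (w (v l))) =
        measure_pmf.expectation (pair_pmf (Pi_pmf A d P) (Pi_pmf B d P))
          (\<lambda>z. \<Prod>l\<in>L. G l (fst z (u l)) (snd z (v l)))"
    unfolding split integral_map_pmf
    using assms(6) by (intro Bochner_Integration.integral_cong prod.cong) (force simp: A_def)+
  also have "\<dots> = measure_pmf.expectation (Pi_pmf A d P)
      (\<lambda>f. measure_pmf.expectation (Pi_pmf B d P) (\<lambda>g. \<Prod>l\<in>L. G l (f (u l)) (g (v l))))"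
    using fin by (simp add: expectation_pair_pmf finite_set_pmf_Pi_pmf)
  also have "\<dots> = measure_pmf.expectation (Pi_pmf A d P)
      (\<lambda>f. \<Prod>l\<in>L. measure_pmf.expectation (P (v l)) (\<lambda>y. G l (f (u l)) y))"
    using fin assms
    by (intro Bochner_Integration.integral_cong refl
          expectation_prod_Pi_pmf_inj[where g = "\<lambda>l. G l (_ (u l))"]) (auto simp: A_def B_def)
  also have "\<dots> = (\<Prod>l\<in>L. measure_pmf.expectation (P (u l))
                     (\<lambda>x. measure_pmf.expectation (P (v l)) (\<lambda>y. G l x y)))"
    using fin assms
    by (intro expectation_prod_Pi_pmf_inj) (auto simp: A_def intro!: Bochner_Integration.integral_nonneg)
  finally show ?thesis .
qed

lemma pair_pmf_Pi_pmf:
  assumes "finite I"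
  shows "pair_pmf (Pi_pmf I d1 P) (Pi_pmf I d2 Q) =
         map_pmf (\<lambda>w. (\<lambda>x. fst (w x), \<lambda>x. snd (w x)))
           (Pi_pmf I (d1, d2) (\<lambda>i. pair_pmf (P i) (Q i)))"
proof (rule pmf_eqI)
  fix z :: "('a \<Rightarrow> 'b) \<times> ('a \<Rightarrow> 'c)"
  obtain f g where z: "z = (f, g)" by (cases z)
  define h where "h = (\<lambda>w::'a \<Rightarrow> 'b \<times> 'c. (\<lambda>x. fst (w x), \<lambda>x. snd (w x)))"
  have "inj h" unfolding h_def by (rule injI) (auto simp: fun_eq_iff prod_eq_iff)
  moreover have "z = h (\<lambda>x. (f x, g x))" by (simp add: z h_def)
  ultimately have "pmf (map_pmf h (Pi_pmf I (d1, d2) (\<lambda>i. pair_pmf (P i) (Q i)))) z =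
        pmf (Pi_pmf I (d1, d2) (\<lambda>i. pair_pmf (P i) (Q i))) (\<lambda>x. (f x, g x))"
    by (simp add: pmf_map_inj')
  also have "\<dots> = pmf (Pi_pmf I d1 P) f * pmf (Pi_pmf I d2 Q) g"
    using assms by (auto simp: pmf_Pi pmf_pair prod.distrib)
  finally show "pmf (pair_pmf (Pi_pmf I d1 P) (Pi_pmf I d2 Q)) z =
        pmf (map_pmf (\<lambda>w. (\<lambda>x. fst (w x), \<lambda>x. snd (w x)))
               (Pi_pmf I (d1, d2) (\<lambda>i. pair_pmf (P i) (Q i)))) z"
    by (simp add: z pmf_pair h_def)
qed

section \<open>Chernoff bounds\<close>

lemma exp_mult_card_eq_prod:
  assumes "finite L"
  shows "exp (t * real (card {l \<in> L. P l})) = (\<Prod>l\<in>L. exp (t * of_bool (P l)))"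
proof -
  have "real (card {l \<in> L. P l}) = (\<Sum>l\<in>L. of_bool (P l))"
    using assms by (simp add: Int_def conj_commute)
  then show ?thesis by (simp only: sum_distrib_left exp_sum[OF assms])
qed

lemma prod_one_plus_le_exp_sum:
  fixes x :: "'a \<Rightarrow> real"
  assumes "\<And>l. l \<in> L \<Longrightarrow> 0 \<le> 1 + x l"
  shows "(\<Prod>l\<in>L. 1 + x l) \<le> exp (\<Sum>l\<in>L. x l)"
proof (cases "finite L")
  case True
  have "(\<Prod>l\<in>L. 1 + x l) \<le> (\<Prod>l\<in>L. exp (x l))"
    using assms by (intro prod_mono) (auto simp: exp_ge_add_one_self add.commute)
  also have "\<dots> = exp (\<Sum>l\<in>L. x l)" by (simp add: exp_sum True)
  finally show ?thesis .
qed simp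

text \<open>\<open>\<Prod>l\<in>L. 1 + (exp s - 1) * q l\<close> is the moment generating function of a sum of independent
  Bernoulli(\<open>q l\<close>) variables; the Chernoff bounds below assume nothing else about \<open>X\<close>.\<close>

lemma Bernoulli_sum_mgf_le:
  fixes q :: "'a \<Rightarrow> real" and s :: real
  assumes "\<And>l. l \<in> L \<Longrightarrow> 0 \<le> q l \<and> q l \<le> 1"
  shows "(\<Prod>l\<in>L. 1 + (exp s - 1) * q l) \<le> exp ((exp s - 1) * (\<Sum>l\<in>L. q l))"
proof -
  have "0 \<le> 1 + (exp s - 1) * q l" if "l \<in> L" for l
  proof -
    have "-1 \<le> exp s - 1" using exp_gt_zero[of s] by linarith
    then show ?thesis using mult_right_mono[of "-1" "exp s - 1" "q l"] assms[OF that] by linarith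
  qed
  then show ?thesis by (simp add: sum_distrib_left prod_one_plus_le_exp_sum)
qed

lemma Chernoff_upper_tail:
  fixes X :: "'a \<Rightarrow> real"
  assumes "finite (set_pmf M)" "\<And>l. l \<in> L \<Longrightarrow> 0 \<le> q l \<and> q l \<le> 1"
    and "\<And>s. measure_pmf.expectation M (\<lambda>x. exp (s * X x)) = (\<Prod>l\<in>L. 1 + (exp s - 1) * q l)"
    and "0 \<le> t"
  shows "measure_pmf.prob M {x. \<tau> \<le> X x} \<le> exp ((exp t - 1) * (\<Sum>l\<in>L. q l) - t * \<tau>)"
proof -
  have "measure_pmf.prob M {x. \<tau> \<le> X x} \<le>
        measure_pmf.expectation M (\<lambda>x. exp (t * X x)) / exp (t * \<tau>)"
    using assms(1,4) by (rule exponential_Markov)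
  also have "\<dots> \<le> exp ((exp t - 1) * (\<Sum>l\<in>L. q l)) / exp (t * \<tau>)"
    unfolding assms(3) using assms(2) by (intro divide_right_mono Bernoulli_sum_mgf_le) auto
  finally show ?thesis by (simp add: exp_diff)
qed

lemma Chernoff_lower_tail:
  fixes X :: "'a \<Rightarrow> real"
  assumes "finite (set_pmf M)" "\<And>l. l \<in> L \<Longrightarrow> 0 \<le> q l \<and> q l \<le> 1"
    and "\<And>s. measure_pmf.expectation M (\<lambda>x. exp (s * X x)) = (\<Prod>l\<in>L. 1 + (exp s - 1) * q l)"
    and "0 \<le> t"
  shows "measure_pmf.prob M {x. X x \<le> \<tau>} \<le> exp ((exp (- t) - 1) * (\<Sum>l\<in>L. q l) + t * \<tau>)"
proof -
  have "measure_pmf.prob M {x. X x \<le> \<tau>} = measure_pmf.prob M {x. - \<tau> \<le> - X x}"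
    by simp
  also have "\<dots> \<le> measure_pmf.expectation M (\<lambda>x. exp (t * - X x)) / exp (t * - \<tau>)"
    using assms(1,4) by (rule exponential_Markov)
  also have "\<dots> \<le> exp ((exp (- t) - 1) * (\<Sum>l\<in>L. q l)) / exp (t * - \<tau>)"
    using assms(3)[of "- t"] assms(2) by (simp add: divide_right_mono Bernoulli_sum_mgf_le)
  finally show ?thesis by (simp flip: exp_diff)
qed

section \<open>The observation model\<close>

text \<open>The flip and erasure matrices of \<open>Ypmf\<close> are merged into one matrix of independent
  (flip, erased) pairs, so that every entry of \<open>Y\<close> depends on a single coordinate of the noise.\<close>

definition noise_pmf :: "real \<Rightarrow> real \<Rightarrow> (bool \<times> bool) pmf" where
  "noise_pmf p eps = pair_pmf (bernoulli_pmf p) (bernoulli_pmf eps)"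

definition noise_matrix_pmf :: "nat \<Rightarrow> real \<Rightarrow> real \<Rightarrow> (nat \<times> nat \<Rightarrow> bool \<times> bool) pmf" where
  "noise_matrix_pmf n p eps = Pi_pmf ({..<n} \<times> {..<n}) (False, False) (\<lambda>_. noise_pmf p eps)"

definition block_bits_pmf :: "nat \<Rightarrow> (nat \<times> nat \<Rightarrow> bool) pmf" where
  "block_bits_pmf r = Pi_pmf ({..<r} \<times> {..<r}) False (\<lambda>_. bernoulli_pmf (1/2))"

definition observe_noisy ::
  "nat \<Rightarrow> (nat \<Rightarrow> nat) \<Rightarrow> (nat \<Rightarrow> nat) \<Rightarrow>
   (nat \<times> nat \<Rightarrow> bool) \<times> (nat \<times> nat \<Rightarrow> bool \<times> bool) \<Rightarrow> obsmat" where
  "observe_noisy n blkA blkB z = observe n blkA blkB (fst z, \<lambda>x. fst (snd z x), \<lambda>x. snd (snd z x))"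

lemma finite_set_noise_matrix_pmf: "finite (set_pmf (noise_matrix_pmf n p eps))"
  unfolding noise_matrix_pmf_def by (rule finite_set_pmf_Pi_pmf) auto

lemma finite_set_block_bits_pmf: "finite (set_pmf (block_bits_pmf r))"
  unfolding block_bits_pmf_def by (rule finite_set_pmf_Pi_pmf) auto

lemma Ypmf_eq_observe_noisy:
  "Ypmf n r blkA blkB p eps =
     map_pmf (observe_noisy n blkA blkB) (pair_pmf (block_bits_pmf r) (noise_matrix_pmf n p eps))"
proof -
  have "pair_pmf (Pi_pmf ({..<n} \<times> {..<n}) False (\<lambda>_. bernoulli_pmf p))
                 (Pi_pmf ({..<n} \<times> {..<n}) False (\<lambda>_. bernoulli_pmf eps)) =
        map_pmf (\<lambda>w. (\<lambda>x. fst (w x), \<lambda>x. snd (w x))) (noise_matrix_pmf n p eps)"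
    unfolding noise_matrix_pmf_def noise_pmf_def by (rule pair_pmf_Pi_pmf) auto
  then show ?thesis
    unfolding Ypmf_def block_bits_pmf_def[symmetric]
    by (simp add: pair_map_pmf2 map_pmf_comp observe_noisy_def[abs_def] apsnd_def map_prod_def
        case_prod_beta)
qed

lemma observe_noisy_entry:
  assumes "a < n" "l < n"
  shows "observe_noisy n blkA blkB (\<xi>, w) (a, l) =
         (if snd (w (a, l)) then None else Some (\<xi> (blkA a, blkB l) \<noteq> fst (w (a, l))))"
  using assms by (simp add: observe_noisy_def observe_def)

definition observed_agree :: "bool \<Rightarrow> bool \<Rightarrow> bool \<times> bool \<Rightarrow> bool \<times> bool \<Rightarrow> bool" where
  "observed_agree x y u v \<longleftrightarrow> \<not> snd u \<and> \<not> snd v \<and> (x \<noteq> fst u) = (y \<noteq> fst v)"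

lemma sim_observe_noisy:
  assumes "b < n" "blkA 0 = 0"
  shows "sim n (observe_noisy n blkA blkB (\<xi>, w)) 0 b =
         card {l \<in> {..<n}. observed_agree (\<xi> (0, blkB l)) (\<xi> (blkA b, blkB l)) (w (0, l)) (w (b, l))}"
  unfolding sim_def using assms
  by (intro arg_cong[where f = card] Collect_cong)
     (auto simp: observe_noisy_entry observed_agree_def split: if_splits)

text \<open>Two independent BSC(\<open>p\<close>) outputs agree with probability \<open>bsc_agree p\<close> if the inputs
  are equal and with probability \<open>1 - bsc_agree p\<close> otherwise.\<close>

definition bsc_agree :: "real \<Rightarrow> real" where
  "bsc_agree p = (1 - p)^2 + p^2"

lemma bsc_agree_gap: "bsc_agree p - (1 - bsc_agree p) = (1 - 2 * p)^2"
  by (simp add: bsc_agree_def power2_eq_square algebra_simps)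

lemma bsc_agree_bounds:
  assumes "0 \<le> p" "p \<le> 1"
  shows "(1 - 2 * p)^2 \<le> bsc_agree p" "bsc_agree p \<le> 1" "0 \<le> bsc_agree p"
proof -
  have "bsc_agree p = 1 - 2 * (p * (1 - p))"
    by (simp add: bsc_agree_def power2_eq_square algebra_simps)
  moreover have "0 \<le> p * (1 - p)" using assms by simp
  ultimately show "bsc_agree p \<le> 1" by linarith
  then show "(1 - 2 * p)^2 \<le> bsc_agree p" using bsc_agree_gap[of p] by linarith
  show "0 \<le> bsc_agree p" by (simp add: bsc_agree_def)
qed

text \<open>Given the block bits \<open>\<xi>\<close>, \<open>sim n Y 0 b\<close> is a sum over the columns \<open>l\<close> of independent
  indicators with success probabilities \<open>agree_prob p eps blkA blkB \<xi> b l\<close>.\<close>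

definition agree_prob ::
  "real \<Rightarrow> real \<Rightarrow> (nat \<Rightarrow> nat) \<Rightarrow> (nat \<Rightarrow> nat) \<Rightarrow> (nat \<times> nat \<Rightarrow> bool) \<Rightarrow> nat \<Rightarrow> nat \<Rightarrow> real"
where
  "agree_prob p eps blkA blkB \<xi> b l =
     (if b = 0 then 1 - eps
      else (1 - eps)^2 * (if \<xi> (0, blkB l) = \<xi> (blkA b, blkB l) then bsc_agree p else 1 - bsc_agree p))"

lemma agree_prob_bounds:
  assumes "0 \<le> p" "p \<le> 1" "0 \<le> eps" "eps \<le> 1"
  shows "0 \<le> agree_prob p eps blkA blkB \<xi> b l \<and> agree_prob p eps blkA blkB \<xi> b l \<le> 1"
proof -
  have "0 \<le> bsc_agree p" "bsc_agree p \<le> 1" using bsc_agree_bounds[OF assms(1,2)] by auto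
  moreover have "0 \<le> (1 - eps)^2" "(1 - eps)^2 \<le> 1" using assms(3,4) by (auto simp: power_le_one)
  ultimately show ?thesis using assms(3,4) by (auto simp: agree_prob_def intro!: mult_le_one)
qed

lemma expectation_exp_observed_agree:
  assumes "0 \<le> p" "p \<le> 1" "0 \<le> eps" "eps \<le> 1"
  shows "measure_pmf.expectation (noise_pmf p eps) (\<lambda>u. measure_pmf.expectation (noise_pmf p eps)
            (\<lambda>v. exp (t * of_bool (observed_agree x y u v)))) =
         1 + (exp t - 1) * ((1 - eps)^2 * (if x = y then bsc_agree p else 1 - bsc_agree p))"
  using assms
  by (cases x; cases y)
     (simp_all add: noise_pmf_def expectation_pair_pmf integral_bernoulli_pmf observed_agree_def
        bsc_agree_def power2_eq_square algebra_simps)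

lemma expectation_exp_observed:
  assumes "0 \<le> p" "p \<le> 1" "0 \<le> eps" "eps \<le> 1"
  shows "measure_pmf.expectation (noise_pmf p eps) (\<lambda>u. exp (t * of_bool (\<not> snd u))) =
         1 + (exp t - 1) * (1 - eps)"
  using assms
  by (simp add: noise_pmf_def expectation_pair_pmf integral_bernoulli_pmf algebra_simps)

lemma expectation_exp_sim:
  assumes "0 \<le> p" "p \<le> 1" "0 \<le> eps" "eps \<le> 1" "b < n" "blkA 0 = 0"
  shows "measure_pmf.expectation (noise_matrix_pmf n p eps)
           (\<lambda>w. exp (t * real (sim n (observe_noisy n blkA blkB (\<xi>, w)) 0 b))) =
         (\<Prod>l<n. 1 + (exp t - 1) * agree_prob p eps blkA blkB \<xi> b l)"
proof (cases "b = 0")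
  case True
  then have "exp (t * real (sim n (observe_noisy n blkA blkB (\<xi>, w)) 0 b)) =
             (\<Prod>l<n. exp (t * of_bool (\<not> snd (w (0, l)))))" for w
    using assms(5,6) exp_mult_card_eq_prod[of "{..<n}" t "\<lambda>l. \<not> snd (w (0, l))"]
    by (simp add: sim_observe_noisy observed_agree_def)
  moreover have "measure_pmf.expectation (noise_matrix_pmf n p eps)
                   (\<lambda>w. \<Prod>l<n. exp (t * of_bool (\<not> snd (w (0, l))))) =
                 (\<Prod>l<n. measure_pmf.expectation (noise_pmf p eps) (\<lambda>u. exp (t * of_bool (\<not> snd u))))"
    unfolding noise_matrix_pmf_def using assms(5)
    by (intro expectation_prod_Pi_pmf_inj[where u = "\<lambda>l. (0, l)"]) (auto simp: inj_on_def)
  ultimately show ?thesis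
    using assms by (simp add: expectation_exp_observed agree_prob_def True)
next
  case False
  have "exp (t * real (sim n (observe_noisy n blkA blkB (\<xi>, w)) 0 b)) =
        (\<Prod>l<n. exp (t * of_bool (observed_agree (\<xi> (0, blkB l)) (\<xi> (blkA b, blkB l))
                                      (w (0, l)) (w (b, l)))))" for w
    unfolding sim_observe_noisy[where blkA = blkA, OF assms(5,6)] by (rule exp_mult_card_eq_prod) simp
  moreover have "measure_pmf.expectation (noise_matrix_pmf n p eps)
      (\<lambda>w. \<Prod>l<n. exp (t * of_bool (observed_agree (\<xi> (0, blkB l)) (\<xi> (blkA b, blkB l))
                                      (w (0, l)) (w (b, l))))) =
      (\<Prod>l<n. measure_pmf.expectation (noise_pmf p eps) (\<lambda>u. measure_pmf.expectation (noise_pmf p eps)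
            (\<lambda>v. exp (t * of_bool (observed_agree (\<xi> (0, blkB l)) (\<xi> (blkA b, blkB l)) u v)))))"
    unfolding noise_matrix_pmf_def using assms(5) False
    by (intro expectation_prod_Pi_pmf_disjoint_pairs) (auto simp: inj_on_def)
  ultimately show ?thesis
    using assms by (simp add: expectation_exp_observed_agree agree_prob_def False)
qed

section \<open>Tails of the similarities\<close>

lemma sum_block_partition:
  fixes h :: "nat \<Rightarrow> real"
  assumes "block_partition n r k blk"
  shows "(\<Sum>l<n. h (blk l)) = real k * (\<Sum>c<r. h c)"
proof -
  have "(\<Sum>l<n. h (blk l)) = (\<Sum>c<r. \<Sum>l\<in>{l \<in> {..<n}. blk l = c}. h (blk l))"
    using assms by (subst sum.group[symmetric, of "{..<n}" "{..<r}" blk]) (auto simp: block_partition_def)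
  also have "\<dots> = (\<Sum>c<r. real k * h c)"
    using assms by (intro sum.cong refl) (simp add: block_partition_def)
  finally show ?thesis by (simp add: sum_distrib_left)
qed

lemma sum_agree_prob_same_block:
  assumes "0 \<le> p" "p \<le> 1" "0 \<le> eps" "eps \<le> 1" "blkA b = 0"
  shows "real n * (1 - eps)^2 * bsc_agree p \<le> (\<Sum>l<n. agree_prob p eps blkA blkB \<xi> b l)"
proof (cases "b = 0")
  case True
  have "(1 - eps) * bsc_agree p \<le> 1"
    using assms bsc_agree_bounds[OF assms(1,2)] by (intro mult_le_one) auto
  then have "(1 - eps)^2 * bsc_agree p \<le> 1 - eps"
    using assms by (simp add: power2_eq_square mult.assoc mult_left_le)
  then have "real n * ((1 - eps)^2 * bsc_agree p) \<le> real n * (1 - eps)" by (intro mult_left_mono) auto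
  then show ?thesis by (simp add: agree_prob_def True mult.assoc)
qed (use assms in \<open>simp add: agree_prob_def\<close>)

lemma sum_agree_prob_other_block:
  assumes "0 \<le> p" "p \<le> 1" "b \<noteq> 0" "block_partition n r k blkB" "r * k = n"
    and "real (card {c \<in> {..<r}. \<xi> (0, c) = \<xi> (blkA b, c)}) \<le> 3 * real r / 4"
  shows "(\<Sum>l<n. agree_prob p eps blkA blkB \<xi> b l) \<le>
         real n * (1 - eps)^2 * (bsc_agree p - (1 - 2 * p)^2 / 4)"
proof -
  define s where "s = bsc_agree p"
  define d where "d = (1 - 2 * p)^2"
  define h where "h c = (if \<xi> (0, c) = \<xi> (blkA b, c) then s else 1 - s)" for c
  have "(\<Sum>c<r. h c) = (\<Sum>c<r. (1 - s) + d * of_bool (\<xi> (0, c) = \<xi> (blkA b, c)))"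
    using bsc_agree_gap[of p] by (intro sum.cong refl) (simp add: h_def s_def d_def)
  also have "\<dots> = real r * (1 - s) + d * real (card {c \<in> {..<r}. \<xi> (0, c) = \<xi> (blkA b, c)})"
    by (simp add: sum.distrib flip: sum_distrib_left) (simp add: Int_def conj_commute)
  also have "\<dots> \<le> real r * (1 - s) + d * (3 * real r / 4)"
    using assms(6) by (intro add_left_mono mult_left_mono) (auto simp: d_def)
  also have "\<dots> = real r * (s - d / 4)"
  proof -
    have d: "d = 2 * s - 1" using bsc_agree_gap[of p] by (simp add: s_def d_def)
    show ?thesis unfolding d by (simp add: field_simps)
  qed
  finally have "real k * (\<Sum>c<r. h c) \<le> real k * (real r * (s - d / 4))"
    by (rule mult_left_mono) simp
  also have "real k * (real r * (s - d / 4)) = real n * (s - d / 4)"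
    using assms(5) by (simp flip: of_nat_mult mult.assoc add: mult.commute)
  finally have "(1 - eps)^2 * (real k * (\<Sum>c<r. h c)) \<le> (1 - eps)^2 * (real n * (s - d / 4))"
    by (rule mult_left_mono) simp
  moreover have "(\<Sum>l<n. agree_prob p eps blkA blkB \<xi> b l) = (1 - eps)^2 * (\<Sum>l<n. h (blkB l))"
    using assms(3) unfolding h_def s_def by (simp add: agree_prob_def sum_distrib_left)
  moreover have "(\<Sum>l<n. h (blkB l)) = real k * (\<Sum>c<r. h c)"
    by (rule sum_block_partition[OF assms(4)])
  ultimately show ?thesis by (simp add: s_def d_def mult_ac)
qed

lemma exp_neg_le_quadratic:
  fixes x :: real
  assumes "0 \<le> x" "x \<le> 1"
  shows "exp (- x) \<le> 1 - x + x^2"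
proof -
  have "exp (- x) = 1 / exp x" by (simp add: exp_minus field_simps)
  also have "\<dots> \<le> 1 / (1 + x)"
    using exp_ge_add_one_self[of x] assms by (intro divide_left_mono) auto
  also have "\<dots> \<le> 1 - x + x^2"
  proof -
    have "1 \<le> (1 + x) * (1 - x + x^2)"
      using assms by (simp add: algebra_simps power2_eq_square power3_eq_cube)
    then show ?thesis using assms by (simp add: field_simps)
  qed
  finally show ?thesis .
qed

lemma Chernoff_exponent_upper:
  fixes N s d S :: real
  assumes "0 \<le> N" "0 < d" "d \<le> s" "s \<le> 1" "0 \<le> S" "S \<le> N * (s - d/4)"
  shows "(exp (d/16) - 1) * S - (d/16) * (N * (s - d/8)) \<le> - (d^2 * N / 256)"
proof -
  define t where "t = d/16"
  have t: "0 \<le> t" "t \<le> 1" using assms by (auto simp: t_def)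
  have "(exp t - 1) * S \<le> (exp t - 1) * (N * (s - d/4))"
    using t assms by (intro mult_left_mono) auto
  also have "\<dots> \<le> (t + t^2) * (N * (s - d/4))"
    using exp_bound[OF t] assms by (intro mult_right_mono) auto
  finally have "(exp t - 1) * S \<le> (t + t^2) * (N * (s - d/4))" .
  moreover have "t^2 * (N * (s - d/4)) \<le> t^2 * N"
    using assms by (intro mult_left_mono) (auto intro: mult_left_le)
  moreover have "(t + t^2) * (N * (s - d/4)) - t * (N * (s - d/8)) = - t * N * d / 8 + t^2 * (N * (s - d/4))"
    by (simp add: algebra_simps)
  moreover have "- t * N * d / 8 + t^2 * N = - (d^2 * N / 256)"
    by (simp add: t_def power2_eq_square field_simps)
  ultimately show ?thesis unfolding t_def by linarith
qed

lemma Chernoff_exponent_lower: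
  fixes N s d S :: real
  assumes "0 \<le> N" "0 < d" "d \<le> s" "s \<le> 1" "N * s \<le> S"
  shows "(exp (- (d/16)) - 1) * S + (d/16) * (N * (s - d/8)) \<le> - (d^2 * N / 256)"
proof -
  define t where "t = d/16"
  have t: "0 \<le> t" "t \<le> 1" using assms by (auto simp: t_def)
  have "(exp (-t) - 1) * S \<le> (exp (-t) - 1) * (N * s)"
    using t assms by (intro mult_left_mono_neg) auto
  also have "\<dots> \<le> (- t + t^2) * (N * s)"
    using exp_neg_le_quadratic[OF t] assms by (intro mult_right_mono) auto
  finally have "(exp (-t) - 1) * S \<le> (- t + t^2) * (N * s)" .
  moreover have "t^2 * (N * s) \<le> t^2 * N"
    using assms by (intro mult_left_mono) (auto intro: mult_left_le)
  moreover have "(- t + t^2) * (N * s) + t * (N * (s - d/8)) = - t * N * d / 8 + t^2 * (N * s)"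
    by (simp add: algebra_simps)
  moreover have "- t * N * d / 8 + t^2 * N = - (d^2 * N / 256)"
    by (simp add: t_def power2_eq_square field_simps)
  ultimately show ?thesis unfolding t_def by linarith
qed

text \<open>The expected similarity of row 0 with a row of its own block is at least
  \<open>n (1 - eps)\<^sup>2 bsc_agree p\<close>; with a row of a block whose bits agree with those of block 0 on at
  most three quarters of the column blocks it is at most \<open>n (1 - eps)\<^sup>2 (bsc_agree p - \<delta>/4)\<close>,
  where \<open>\<delta> = (1 - 2p)\<^sup>2\<close>. The threshold separates the two in the middle.\<close>

definition sim_threshold :: "nat \<Rightarrow> real \<Rightarrow> real \<Rightarrow> real" where
  "sim_threshold n p eps = real n * (1 - eps)^2 * (bsc_agree p - (1 - 2 * p)^2 / 8)"

definition sim_tail :: "nat \<Rightarrow> real \<Rightarrow> real \<Rightarrow> real" where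
  "sim_tail n p eps = exp (- ((1 - 2 * p)^4 * (real n * (1 - eps)^2) / 256))"

lemma prob_sim_le_threshold:
  assumes "0 \<le> p" "p < 1/2" "0 \<le> eps" "eps \<le> 1" "b < n" "blkA b = 0" "blkA 0 = 0"
  shows "measure_pmf.prob (noise_matrix_pmf n p eps)
           {w. real (sim n (observe_noisy n blkA blkB (\<xi>, w)) 0 b) \<le> sim_threshold n p eps}
         \<le> sim_tail n p eps"
proof -
  define d where "d = (1 - 2 * p)^2"
  have d: "0 < d" "d \<le> bsc_agree p" "bsc_agree p \<le> 1"
    using assms(1,2) bsc_agree_bounds[of p] by (auto simp: d_def)
  have "measure_pmf.prob (noise_matrix_pmf n p eps)
          {w. real (sim n (observe_noisy n blkA blkB (\<xi>, w)) 0 b) \<le> sim_threshold n p eps}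
        \<le> exp ((exp (- (d/16)) - 1) * (\<Sum>l<n. agree_prob p eps blkA blkB \<xi> b l)
               + d/16 * sim_threshold n p eps)"
    using assms d(1)
    by (intro Chernoff_lower_tail finite_set_noise_matrix_pmf agree_prob_bounds expectation_exp_sim)
       auto
  also have "\<dots> \<le> sim_tail n p eps"
  proof -
    have d4: "(1 - 2 * p)^4 = d^2" by (simp add: d_def flip: power_mult)
    have "real n * (1 - eps)^2 * bsc_agree p \<le> (\<Sum>l<n. agree_prob p eps blkA blkB \<xi> b l)"
      using assms by (intro sum_agree_prob_same_block) auto
    then show ?thesis
      unfolding sim_tail_def exp_le_cancel_iff sim_threshold_def d4 d_def[symmetric]
      using d assms(3,4) by (intro Chernoff_exponent_lower) auto
  qed
  finally show ?thesis .
qed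

lemma prob_sim_ge_threshold:
  assumes "0 \<le> p" "p < 1/2" "0 \<le> eps" "eps \<le> 1" "b < n" "blkA b \<noteq> 0" "blkA 0 = 0"
    and "block_partition n r k blkB" "r * k = n"
    and "real (card {c \<in> {..<r}. \<xi> (0, c) = \<xi> (blkA b, c)}) \<le> 3 * real r / 4"
  shows "measure_pmf.prob (noise_matrix_pmf n p eps)
           {w. sim_threshold n p eps \<le> real (sim n (observe_noisy n blkA blkB (\<xi>, w)) 0 b)}
         \<le> sim_tail n p eps"
proof -
  define d where "d = (1 - 2 * p)^2"
  have d: "0 < d" "d \<le> bsc_agree p" "bsc_agree p \<le> 1"
    using assms(1,2) bsc_agree_bounds[of p] by (auto simp: d_def)
  have b: "b \<noteq> 0" using assms(6,7) by metis
  have "measure_pmf.prob (noise_matrix_pmf n p eps)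
          {w. sim_threshold n p eps \<le> real (sim n (observe_noisy n blkA blkB (\<xi>, w)) 0 b)}
        \<le> exp ((exp (d/16) - 1) * (\<Sum>l<n. agree_prob p eps blkA blkB \<xi> b l)
               - d/16 * sim_threshold n p eps)"
    using assms d(1)
    by (intro Chernoff_upper_tail finite_set_noise_matrix_pmf agree_prob_bounds expectation_exp_sim)
       auto
  also have "\<dots> \<le> sim_tail n p eps"
  proof -
    have d4: "(1 - 2 * p)^4 = d^2" by (simp add: d_def flip: power_mult)
    have "(\<Sum>l<n. agree_prob p eps blkA blkB \<xi> b l) \<le>
                   real n * (1 - eps)^2 * (bsc_agree p - (1 - 2 * p)^2 / 4)"
      using assms b by (intro sum_agree_prob_other_block) auto
    moreover have "0 \<le> (\<Sum>l<n. agree_prob p eps blkA blkB \<xi> b l)"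
      using assms agree_prob_bounds[of p eps] by (intro sum_nonneg) auto
    ultimately show ?thesis
      unfolding sim_tail_def exp_le_cancel_iff sim_threshold_def d4 d_def[symmetric]
      using d assms(3,4) by (intro Chernoff_exponent_upper) auto
  qed
  finally show ?thesis .
qed

lemma prob_block_bits_agree_ge:
  assumes "0 < i" "i < r"
  shows "measure_pmf.prob (block_bits_pmf r)
           {\<xi>. 3 * real r / 4 \<le> real (card {c \<in> {..<r}. \<xi> (0, c) = \<xi> (i, c)})}
         \<le> exp (- (real r / 32))"
proof -
  have mgf: "measure_pmf.expectation (block_bits_pmf r)
               (\<lambda>\<xi>. exp (s * real (card {c \<in> {..<r}. \<xi> (0, c) = \<xi> (i, c)}))) =
             (\<Prod>c<r. 1 + (exp s - 1) * (1/2))" for s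
  proof -
    have "measure_pmf.expectation (block_bits_pmf r)
            (\<lambda>\<xi>. exp (s * real (card {c \<in> {..<r}. \<xi> (0, c) = \<xi> (i, c)}))) =
          measure_pmf.expectation (block_bits_pmf r)
            (\<lambda>\<xi>. \<Prod>c<r. exp (s * of_bool (\<xi> (0, c) = \<xi> (i, c))))"
      by (simp only: exp_mult_card_eq_prod[OF finite_lessThan])
    also have "\<dots> = (\<Prod>c<r. measure_pmf.expectation (bernoulli_pmf (1/2))
             (\<lambda>x. measure_pmf.expectation (bernoulli_pmf (1/2)) (\<lambda>y. exp (s * of_bool (x = y)))))"
      unfolding block_bits_pmf_def using assms
      by (intro expectation_prod_Pi_pmf_disjoint_pairs) (auto simp: inj_on_def)
    also have "\<dots> = (\<Prod>c<r. 1 + (exp s - 1) * (1/2))"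
      by (intro prod.cong refl) (simp add: integral_bernoulli_pmf field_simps)
    finally show ?thesis .
  qed
  have "measure_pmf.prob (block_bits_pmf r)
          {\<xi>. 3 * real r / 4 \<le> real (card {c \<in> {..<r}. \<xi> (0, c) = \<xi> (i, c)})}
        \<le> exp ((exp (1/4) - 1) * (\<Sum>c<r. 1/2) - 1/4 * (3 * real r / 4))"
    by (rule Chernoff_upper_tail[OF finite_set_block_bits_pmf _ mgf]) auto
  also have "\<dots> \<le> exp (- (real r / 32))"
  proof -
    have "exp (1/4::real) \<le> 1 + 1/4 + (1/4)^2" by (rule exp_bound) auto
    then have "exp (1/4::real) - 1 \<le> 5/16" by (simp add: power2_eq_square)
    then have "(exp (1/4) - 1) * real r \<le> 5/16 * real r" by (intro mult_right_mono) auto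
    then show ?thesis by simp
  qed
  finally show ?thesis .
qed

lemma prob_column_observed:
  assumes "0 \<le> p" "p \<le> 1" "0 \<le> eps" "eps \<le> 1" "T \<subseteq> {..<n}" "j < n"
  shows "measure_pmf.prob (noise_matrix_pmf n p eps) {w. \<forall>a\<in>T. \<not> snd (w (a, j))} = (1 - eps) ^ card T"
proof -
  have fin: "finite T" using assms(5) finite_subset by blast
  have prod_eq: "(\<Prod>a\<in>T. of_bool (\<not> snd (w (a, j))) :: real) = of_bool (\<forall>a\<in>T. \<not> snd (w (a, j)))"
    for w using fin by (induction T rule: finite_induct) auto
  have "measure_pmf.prob (noise_matrix_pmf n p eps) {w. \<forall>a\<in>T. \<not> snd (w (a, j))} =
        measure_pmf.expectation (noise_matrix_pmf n p eps) (\<lambda>w. \<Prod>a\<in>T. of_bool (\<not> snd (w (a, j))))"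
    by (simp add: prob_eq_expectation_indicator prod_eq)
  also have "\<dots> = (\<Prod>a\<in>T. measure_pmf.expectation (noise_pmf p eps) (\<lambda>u. of_bool (\<not> snd u)))"
    unfolding noise_matrix_pmf_def using assms
    by (intro expectation_prod_Pi_pmf_inj[where u = "\<lambda>a. (a, j)"]) (auto simp: inj_on_def)
  also have "\<dots> = (1 - eps) ^ card T"
    using assms by (simp add: noise_pmf_def expectation_pair_pmf integral_bernoulli_pmf)
  finally show ?thesis .
qed

section \<open>Step 1 selects the first block\<close>

lemma step1_valid_eq_if_separated:
  assumes "step1_valid n k Y S" "A \<subseteq> {..<n}" "card A = k"
    and "\<And>a b. a \<in> A \<Longrightarrow> b \<in> {..<n} - A \<Longrightarrow> sim n Y 0 b < sim n Y 0 a"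
  shows "S = A"
proof (rule ccontr)
  assume "S \<noteq> A"
  have S: "S \<subseteq> {..<n}" "card S = k" "\<And>i j. i \<in> S \<Longrightarrow> j \<in> {..<n} - S \<Longrightarrow> sim n Y 0 j \<le> sim n Y 0 i"
    using assms(1) by (auto simp: step1_valid_def)
  have fin: "finite S" "finite A" using S(1) assms(2) finite_subset by auto
  have "\<not> S \<subseteq> A" "\<not> A \<subseteq> S"
    using card_subset_eq[OF fin(2), of S] card_subset_eq[OF fin(1), of A] \<open>S \<noteq> A\<close> S(2) assms(3)
    by auto
  then obtain a b where a: "a \<in> A" "a \<notin> S" and b: "b \<in> S" "b \<notin> A" by blast
  have "sim n Y 0 a \<le> sim n Y 0 b" using S(3)[OF b(1)] a assms(2) by auto
  moreover have "sim n Y 0 b < sim n Y 0 a" using assms(4)[OF a(1)] b S(1) by auto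
  ultimately show False by simp
qed

locale noisy_block_model =
  fixes n r k :: nat and blkA blkB :: "nat \<Rightarrow> nat" and p eps :: real
  assumes p: "0 \<le> p" "p < 1/2" and eps: "0 \<le> eps" "eps \<le> 1"
    and n_pos: "0 < n" and rk: "r * k = n"
    and partA: "block_partition n r k blkA" and partB: "block_partition n r k blkB"
    and blkA_0: "blkA 0 = 0"
begin

abbreviation \<Omega> :: "((nat \<times> nat \<Rightarrow> bool) \<times> (nat \<times> nat \<Rightarrow> bool \<times> bool)) pmf" where
  "\<Omega> \<equiv> pair_pmf (block_bits_pmf r) (noise_matrix_pmf n p eps)"

abbreviation Yobs :: "(nat \<times> nat \<Rightarrow> bool) \<times> (nat \<times> nat \<Rightarrow> bool \<times> bool) \<Rightarrow> obsmat" where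
  "Yobs \<equiv> observe_noisy n blkA blkB"

definition first_block :: "nat set" where
  "first_block = {a \<in> {..<n}. blkA a = 0}"

definition bits_separated :: "(nat \<times> nat \<Rightarrow> bool) \<Rightarrow> bool" where
  "bits_separated \<xi> \<longleftrightarrow>
     (\<forall>i\<in>{0<..<r}. real (card {c \<in> {..<r}. \<xi> (0, c) = \<xi> (i, c)}) < 3 * real r / 4)"

definition many_observed_event :: "nat \<Rightarrow> ((nat \<times> nat \<Rightarrow> bool) \<times> (nat \<times> nat \<Rightarrow> bool \<times> bool)) set" where
  "many_observed_event m = {z. \<exists>j<n. m < card {a \<in> first_block. \<not> snd (snd z (a, j))}}"

definition low_sim_event :: "((nat \<times> nat \<Rightarrow> bool) \<times> (nat \<times> nat \<Rightarrow> bool \<times> bool)) set" where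
  "low_sim_event = {z. \<exists>a\<in>first_block. real (sim n (Yobs z) 0 a) \<le> sim_threshold n p eps}"

definition high_sim_event :: "((nat \<times> nat \<Rightarrow> bool) \<times> (nat \<times> nat \<Rightarrow> bool \<times> bool)) set" where
  "high_sim_event = {z. bits_separated (fst z) \<and>
     (\<exists>b\<in>{..<n} - first_block. sim_threshold n p eps \<le> real (sim n (Yobs z) 0 b))}"

lemma first_block_subset: "first_block \<subseteq> {..<n}"
  by (auto simp: first_block_def)

lemma finite_first_block: "finite first_block"
  using first_block_subset finite_subset by blast

lemma card_first_block: "card first_block = k"
proof -
  have "0 < r" using rk n_pos by (cases r) auto
  then show ?thesis using partA by (simp add: first_block_def block_partition_def)
qed

lemma selected_rows_eq_first_block:
  assumes "step1_valid n k (Yobs z) S"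
    and "z \<notin> low_sim_event" "bits_separated (fst z)" "z \<notin> high_sim_event"
  shows "S = first_block"
proof (rule step1_valid_eq_if_separated[OF assms(1) first_block_subset card_first_block])
  fix a b assume "a \<in> first_block" "b \<in> {..<n} - first_block"
  then have "sim_threshold n p eps < real (sim n (Yobs z) 0 a)"
    and "real (sim n (Yobs z) 0 b) < sim_threshold n p eps"
    using assms(2-4) by (auto simp: low_sim_event_def high_sim_event_def not_le)
  then show "sim n (Yobs z) 0 b < sim n (Yobs z) 0 a" by simp
qed

lemma col_count_first_block_le:
  assumes "z \<notin> many_observed_event m" "j < n"
  shows "col_count (Yobs z) first_block j \<le> m"
proof -
  obtain \<xi> w where z: "z = (\<xi>, w)" by (cases z)
  have "{a \<in> first_block. Yobs z (a, j) \<noteq> None} = {a \<in> first_block. \<not> snd (snd z (a, j))}"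
    using first_block_subset assms(2) by (auto simp: z observe_noisy_entry)
  moreover have "card {a \<in> first_block. \<not> snd (snd z (a, j))} \<le> m"
    using assms unfolding many_observed_event_def by auto
  ultimately show ?thesis by (simp add: col_count_def)
qed

lemma prob_many_observed_event:
  "measure_pmf.prob \<Omega> (many_observed_event m) \<le> real n * (real (k choose Suc m) * (1 - eps) ^ Suc m)"
proof -
  define Ts where "Ts = {T. T \<subseteq> first_block \<and> card T = Suc m}"
  have "many_observed_event m \<subseteq> (\<Union>j\<in>{..<n}. \<Union>T\<in>Ts. {z. \<forall>a\<in>T. \<not> snd (snd z (a, j))})"
  proof
    fix z assume "z \<in> many_observed_event m"
    then obtain j where j: "j < n" "Suc m \<le> card {a \<in> first_block. \<not> snd (snd z (a, j))}"
      by (auto simp: many_observed_event_def)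
    then obtain T where "T \<subseteq> {a \<in> first_block. \<not> snd (snd z (a, j))}" "card T = Suc m"
      by (meson obtain_subset_with_card_n)
    then show "z \<in> (\<Union>j\<in>{..<n}. \<Union>T\<in>Ts. {z. \<forall>a\<in>T. \<not> snd (snd z (a, j))})"
      using j(1) by (auto simp: Ts_def)
  qed
  then have "measure_pmf.prob \<Omega> (many_observed_event m) \<le>
             measure_pmf.prob \<Omega> (\<Union>j\<in>{..<n}. \<Union>T\<in>Ts. {z. \<forall>a\<in>T. \<not> snd (snd z (a, j))})"
    by (rule measure_pmf.finite_measure_mono) simp
  also have "\<dots> \<le> real (card {..<n}) * (real (card Ts) * (1 - eps) ^ Suc m)"
  proof (intro prob_UN_le_card_mult)
    show "finite Ts" unfolding Ts_def using finite_first_block by (auto intro: finite_subset[of _ "Pow first_block"])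
    fix j T assume "j \<in> {..<n}" "T \<in> Ts"
    then show "measure_pmf.prob \<Omega> {z. \<forall>a\<in>T. \<not> snd (snd z (a, j))} \<le> (1 - eps) ^ Suc m"
      using first_block_subset p eps prob_column_observed[of p eps T n j]
      by (intro prob_pair_pmf_le finite_set_block_bits_pmf finite_set_noise_matrix_pmf)
         (auto simp: Ts_def)
  qed simp
  also have "card Ts = k choose Suc m"
    unfolding Ts_def using n_subsets[OF finite_first_block] card_first_block by simp
  finally show ?thesis by simp
qed

lemma prob_bits_not_separated:
  "measure_pmf.prob \<Omega> {z. \<not> bits_separated (fst z)} \<le> real r * exp (- (real r / 32))"
proof -
  have "measure_pmf.prob \<Omega> {z. \<not> bits_separated (fst z)} =
        measure_pmf.prob (block_bits_pmf r) {\<xi>. \<not> bits_separated \<xi>}"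
    by (rule prob_pair_pmf_fst)
  also have "\<dots> \<le> measure_pmf.prob (block_bits_pmf r)
      (\<Union>i\<in>{0<..<r}. {\<xi>. 3 * real r / 4 \<le> real (card {c \<in> {..<r}. \<xi> (0, c) = \<xi> (i, c)})})"
    by (intro measure_pmf.finite_measure_mono) (auto simp: bits_separated_def not_less)
  also have "\<dots> \<le> real (card {0<..<r}) * exp (- (real r / 32))"
    by (intro prob_UN_le_card_mult prob_block_bits_agree_ge) auto
  also have "\<dots> \<le> real r * exp (- (real r / 32))"
    by (intro mult_right_mono) auto
  finally show ?thesis .
qed

lemma prob_low_sim_event:
  "measure_pmf.prob \<Omega> low_sim_event \<le> real (card first_block) * sim_tail n p eps"
proof -
  have "low_sim_event =
        (\<Union>a\<in>first_block. {z. real (sim n (Yobs z) 0 a) \<le> sim_threshold n p eps})"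
    by (auto simp: low_sim_event_def)
  also have "measure_pmf.prob \<Omega> \<dots> \<le> real (card first_block) * sim_tail n p eps"
  proof (intro prob_UN_le_card_mult)
    show "finite first_block" by (rule finite_first_block)
    fix a assume "a \<in> first_block"
    then show "measure_pmf.prob \<Omega> {z. real (sim n (Yobs z) 0 a) \<le> sim_threshold n p eps}
               \<le> sim_tail n p eps"
      using p eps blkA_0
      by (intro prob_pair_pmf_le finite_set_block_bits_pmf finite_set_noise_matrix_pmf)
         (auto simp: first_block_def intro!: prob_sim_le_threshold)
  qed
  finally show ?thesis .
qed

lemma prob_high_sim_event:
  "measure_pmf.prob \<Omega> high_sim_event \<le> real (card ({..<n} - first_block)) * sim_tail n p eps"
proof -
  have "high_sim_event = (\<Union>b\<in>{..<n} - first_block.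
          {z. bits_separated (fst z) \<and> sim_threshold n p eps \<le> real (sim n (Yobs z) 0 b)})"
    by (auto simp: high_sim_event_def)
  also have "measure_pmf.prob \<Omega> \<dots> \<le> real (card ({..<n} - first_block)) * sim_tail n p eps"
  proof (intro prob_UN_le_card_mult)
    fix b assume b: "b \<in> {..<n} - first_block"
    then have "b < n" "blkA b \<noteq> 0" "blkA b < r"
      using partA by (auto simp: first_block_def block_partition_def)
    show "measure_pmf.prob \<Omega> {z. bits_separated (fst z) \<and> sim_threshold n p eps \<le> real (sim n (Yobs z) 0 b)}
               \<le> sim_tail n p eps"
    proof (intro prob_pair_pmf_le finite_set_block_bits_pmf finite_set_noise_matrix_pmf)
      fix \<xi>
      show "measure_pmf.prob (noise_matrix_pmf n p eps)
              {w. (\<xi>, w) \<in> {z. bits_separated (fst z) \<and> sim_threshold n p eps \<le> real (sim n (Yobs z) 0 b)}}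
            \<le> sim_tail n p eps"
      proof (cases "bits_separated \<xi>")
        case True
        moreover have "blkA b \<in> {0<..<r}" using \<open>blkA b \<noteq> 0\<close> \<open>blkA b < r\<close> by simp
        ultimately have "real (card {c \<in> {..<r}. \<xi> (0, c) = \<xi> (blkA b, c)}) < 3 * real r / 4"
          unfolding bits_separated_def by blast
        then show ?thesis
          using True p eps blkA_0 partB rk \<open>b < n\<close> \<open>blkA b \<noteq> 0\<close> by (simp add: prob_sim_ge_threshold)
      qed (simp add: sim_tail_def)
    qed
  qed simp
  finally show ?thesis .
qed

lemma prob_col_count_le:
  assumes "\<And>Y. step1_valid n k Y (sel Y)"
  shows "1 - (real n * real (k choose Suc m) * (1 - eps) ^ Suc m + real r * exp (- (real r / 32))
              + real n * sim_tail n p eps)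
         \<le> measure_pmf.prob (Ypmf n r blkA blkB p eps) {Y. \<forall>j<n. col_count Y (sel Y) j \<le> m}"
proof -
  define E where "E = many_observed_event m \<union> {z. \<not> bits_separated (fst z)} \<union> low_sim_event
                        \<union> high_sim_event"
  have "measure_pmf.prob \<Omega> E \<le> measure_pmf.prob \<Omega> (many_observed_event m)
          + measure_pmf.prob \<Omega> {z. \<not> bits_separated (fst z)} + measure_pmf.prob \<Omega> low_sim_event
          + measure_pmf.prob \<Omega> high_sim_event"
  proof -
    have Un: "measure_pmf.prob \<Omega> (A \<union> B) \<le> measure_pmf.prob \<Omega> A + measure_pmf.prob \<Omega> B" for A B
      by (rule measure_Un_le) auto
    show ?thesis
      unfolding E_def using Un[of "_ \<union> _ \<union> _"] Un[of "_ \<union> _"] Un[of "many_observed_event m"]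
      by (smt (verit))
  qed
  also have "\<dots> \<le> real n * (real (k choose Suc m) * (1 - eps) ^ Suc m) + real r * exp (- (real r / 32))
              + (real (card first_block) + real (card ({..<n} - first_block))) * sim_tail n p eps"
    using prob_many_observed_event[of m] prob_bits_not_separated prob_low_sim_event prob_high_sim_event
    unfolding distrib_right by linarith
  also have "real (card first_block) + real (card ({..<n} - first_block)) = real n"
    using first_block_subset finite_first_block card_Diff_subset[of first_block "{..<n}"]
      card_mono[OF _ first_block_subset] by (simp flip: of_nat_add)
  finally have E: "measure_pmf.prob \<Omega> E \<le> real n * real (k choose Suc m) * (1 - eps) ^ Suc m
                     + real r * exp (- (real r / 32)) + real n * sim_tail n p eps"
    by (simp add: mult.assoc)
  have "UNIV - E \<subseteq> Yobs -` {Y. \<forall>j<n. col_count Y (sel Y) j \<le> m}"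
    using selected_rows_eq_first_block[OF assms] col_count_first_block_le by (auto simp: E_def)
  then have "1 - measure_pmf.prob \<Omega> E \<le> measure_pmf.prob \<Omega> (Yobs -` {Y. \<forall>j<n. col_count Y (sel Y) j \<le> m})"
    using measure_pmf.prob_compl[of E \<Omega>] measure_pmf.finite_measure_mono[of "UNIV - E" _ \<Omega>]
    by simp
  then show ?thesis
    using E by (simp add: Ypmf_eq_observe_noisy measure_map_pmf)
qed

end

section \<open>Asymptotics\<close>

lemma binomial_erasure_term_tendsto_zero:
  fixes k :: "nat \<Rightarrow> nat" and \<alpha> \<gamma> c :: real
  assumes "\<And>n. real (k n) \<le> real n powr (\<alpha> - \<gamma>)" "0 < c" "1 < \<gamma> * real M"
  shows "(\<lambda>n. real n * real (k n choose M) * (c / real n powr \<alpha>) ^ M) \<longlonglongrightarrow> 0"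
proof (rule tendsto_sandwich)
  show "eventually (\<lambda>n. 0 \<le> real n * real (k n choose M) * (c / real n powr \<alpha>) ^ M) sequentially"
    using assms(2) by simp
  show "eventually (\<lambda>n. real n * real (k n choose M) * (c / real n powr \<alpha>) ^ M
                         \<le> c ^ M * real n powr (1 - \<gamma> * M)) sequentially"
    using eventually_gt_at_top[of 0]
  proof eventually_elim
    case (elim n)
    have "real (k n choose M) \<le> real (k n) ^ M"
      by (cases "M \<le> k n") (simp_all add: binomial_le_pow binomial_eq_0 flip: of_nat_power)
    also have "\<dots> \<le> (real n powr (\<alpha> - \<gamma>)) ^ M" using assms(1) by (intro power_mono) auto
    finally have "real n * real (k n choose M) * (c / real n powr \<alpha>) ^ M \<le>
                  real n * (real n powr (\<alpha> - \<gamma>)) ^ M * (c / real n powr \<alpha>) ^ M"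
      using assms(2) by (intro mult_right_mono mult_left_mono) auto
    also have "\<dots> = c ^ M * (real n powr 1 * real n powr (real M * (\<alpha> - \<gamma>)) / real n powr (real M * \<alpha>))"
      using elim by (simp add: powr_power power_divide field_simps)
    also have "real n powr 1 * real n powr (real M * (\<alpha> - \<gamma>)) / real n powr (real M * \<alpha>) =
               real n powr (1 + real M * (\<alpha> - \<gamma>) - real M * \<alpha>)"
      by (simp add: powr_add powr_diff)
    also have "1 + real M * (\<alpha> - \<gamma>) - real M * \<alpha> = 1 - \<gamma> * M"
      by (simp add: algebra_simps)
    finally show ?case .
  qed
  show "(\<lambda>n. c ^ M * real n powr (1 - \<gamma> * M)) \<longlonglongrightarrow> 0"
    using assms(3) by (intro tendsto_mult_right_zero tendsto_neg_powr filterlim_real_sequentially) auto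
qed simp

lemma sim_tail_term_tendsto_zero:
  fixes \<alpha> c p :: real
  assumes "\<alpha> < 1/2" "0 < c" "p < 1/2"
  shows "(\<lambda>n. real n * sim_tail n p (1 - c / real n powr \<alpha>)) \<longlonglongrightarrow> 0"
proof -
  define C where "C = (1 - 2 * p)^4 * c^2 / 256"
  have C: "0 < C" using assms by (simp add: C_def)
  have "((\<lambda>x::real. x * exp (- (C * x powr (1 - 2 * \<alpha>)))) \<longlongrightarrow> 0) at_top"
    using C assms(1) by real_asymp
  then have "(\<lambda>n. real n * exp (- (C * real n powr (1 - 2 * \<alpha>)))) \<longlonglongrightarrow> 0"
    by (rule filterlim_compose[OF _ filterlim_real_sequentially])
  moreover have "eventually (\<lambda>n. real n * exp (- (C * real n powr (1 - 2 * \<alpha>))) =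
                 real n * sim_tail n p (1 - c / real n powr \<alpha>)) sequentially"
    using eventually_gt_at_top[of 0]
  proof eventually_elim
    case (elim n)
    have "(real n powr \<alpha>)^2 = real n powr (2 * \<alpha>)"
      using powr_power[of "real n" \<alpha> 2] elim by simp
    then have "real n * (c / real n powr \<alpha>)^2 = c^2 * (real n powr 1 / real n powr (2 * \<alpha>))"
      using elim by (simp add: power_divide field_simps)
    also have "\<dots> = c^2 * real n powr (1 - 2 * \<alpha>)" by (simp add: powr_diff)
    finally show ?case by (simp add: sim_tail_def C_def mult_ac)
  qed
  ultimately show ?thesis by (rule Lim_transform_eventually)
qed

lemma exponent_nonneg_if_factor_le_powr:
  assumes "r * k = n" "1 < n" "real k \<le> real n powr e"
  shows "0 \<le> e"
proof -
  have "1 \<le> real n powr e" using assms by (cases k) auto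
  then show ?thesis using powr_less_one[of "real n" e] assms(2) by fastforce
qed

lemma one_less_mult_Suc_floor_inverse:
  fixes \<gamma> :: real
  assumes "0 < \<gamma>"
  shows "1 < \<gamma> * real (Suc (nat \<lfloor>1 / \<gamma>\<rfloor>))"
proof -
  have "1 / \<gamma> < real (Suc (nat \<lfloor>1 / \<gamma>\<rfloor>))" using assms by simp linarith
  then show ?thesis using assms by (simp add: field_simps)
qed

lemma eventually_le_powr:
  fixes \<alpha> c :: real
  assumes "0 < \<alpha>"
  shows "eventually (\<lambda>n. c \<le> real n powr \<alpha>) sequentially"
proof -
  have "filterlim (\<lambda>x::real. x powr \<alpha>) at_top at_top" using assms by real_asymp
  from filterlim_compose[OF this filterlim_real_sequentially] show ?thesis
    by (simp add: filterlim_at_top)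
qed

lemma mult_exp_neg_tendsto_zero:
  assumes "filterlim r at_top sequentially"
  shows "(\<lambda>n. real (r n) * exp (- (real (r n) / 32))) \<longlonglongrightarrow> 0"
proof -
  have "((\<lambda>x::real. x * exp (- (x / 32))) \<longlongrightarrow> 0) at_top" by real_asymp
  then show ?thesis
    by (rule filterlim_compose[OF _ filterlim_compose[OF filterlim_real_sequentially assms]])
qed

theorem lemma5:
  fixes \<alpha> c p \<gamma> :: real
    and r k :: "nat \<Rightarrow> nat"
    and blkA blkB :: "nat \<Rightarrow> nat \<Rightarrow> nat"
    and sel :: "nat \<Rightarrow> obsmat \<Rightarrow> nat set"
  assumes "0 \<le> \<alpha>" "\<alpha> < 1/2" "c > 0" "0 \<le> p" "p < 1/2" "\<gamma> > 0"
    and "\<And>n. r n * k n = n"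
    and "filterlim r at_top sequentially"
    and "\<And>n. real (k n) \<le> real n powr (\<alpha> - \<gamma>)"
    and "\<And>n. block_partition n (r n) (k n) (blkA n)"
    and "\<And>n. block_partition n (r n) (k n) (blkB n)"
    and "\<And>n. 0 < n \<Longrightarrow> blkA n 0 = 0"
    and "\<And>n Y. step1_valid n (k n) Y (sel n Y)"
  shows "(\<lambda>n. measure_pmf.prob
            (Ypmf n (r n) (blkA n) (blkB n) p (1 - c / real n powr \<alpha>))
            {Y. \<forall>j<n. col_count Y (sel n Y) j \<le> nat \<lfloor>1 / \<gamma>\<rfloor>})
         \<longlonglongrightarrow> 1"
proof -
  define m where "m = nat \<lfloor>1 / \<gamma>\<rfloor>"
  define eps where "eps n = 1 - c / real n powr \<alpha>" for n :: nat
  define P where "P n = measure_pmf.prob (Ypmf n (r n) (blkA n) (blkB n) p (eps n))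
                          {Y. \<forall>j<n. col_count Y (sel n Y) j \<le> m}" for n
  define err where "err n = real n * real (k n choose Suc m) * (c / real n powr \<alpha>) ^ Suc m
      + real (r n) * exp (- (real (r n) / 32)) + real n * sim_tail n p (eps n)" for n
  have "0 < \<alpha>"
    using exponent_nonneg_if_factor_le_powr[OF assms(7)[of 2] _ assms(9)[of 2]] assms(6) by simp
  have lower: "eventually (\<lambda>n. 1 - err n \<le> P n) sequentially"
    using eventually_le_powr[OF \<open>0 < \<alpha>\<close>, of c] eventually_gt_at_top[of 0]
  proof eventually_elim
    case (elim n)
    have "0 \<le> c / real n powr \<alpha>" "c / real n powr \<alpha> \<le> 1" using elim assms(3) by auto
    then have "noisy_block_model n (r n) (k n) (blkA n) (blkB n) p (eps n)"
      using assms(4,5,7,10,11) assms(12)[OF elim(2)] elim(2) by unfold_locales (simp_all add: eps_def)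
    from noisy_block_model.prob_col_count_le[OF this assms(13)]
    show ?case by (simp add: P_def err_def eps_def)
  qed
  have "err \<longlonglongrightarrow> 0 + 0 + 0"
    unfolding err_def eps_def using one_less_mult_Suc_floor_inverse[OF assms(6)]
    by (intro tendsto_add binomial_erasure_term_tendsto_zero[OF assms(9,3)]
          mult_exp_neg_tendsto_zero[OF assms(8)] sim_tail_term_tendsto_zero[OF assms(2,3,5)])
       (simp add: m_def)
  then have "(\<lambda>n. 1 - err n) \<longlonglongrightarrow> 1 - 0" by (intro tendsto_diff tendsto_const) simp
  then have lim: "(\<lambda>n. 1 - err n) \<longlonglongrightarrow> 1" by simp
  have upper: "eventually (\<lambda>n. P n \<le> 1) sequentially" by (simp add: P_def)
  from tendsto_sandwich[OF lower upper lim tendsto_const]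
  show ?thesis unfolding P_def eps_def m_def .
qed

end
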